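(* Let $r\in\mathbb{N}$. Every bounded Borel measurable sigmoidal function $\sigma:\mathbb{R}\to\mathbb{R}$ is discriminatory (for $r$). In particular, every continuous sigmoidal function is discriminatory.
   Context: A function $\sigma:\mathbb{R}\to\mathbb{R}$ is sigmoidal if $\sigma(t)\to1$ as $t\to+\infty$ and $\sigma(t)\to0$ as $t\to-\infty$. For a nonempty compact $X\subset\mathbb{R}^r$, $M(X)$ is the set of regular signed Borel measures on $X$ (finite signed measures whose positive and negative variations are regular Borel measures). $\sigma$ is discriminatory (for $r$) if for every nonempty compact $X\subset\mathbb{R}^r$ and every $\mu\in M(X)$: if $\int_X\sigma(m^{\mathrm T}x+k)\,d\mu(x)=0$ for all $m\in\mathbb{Z}^r$, $k\in\mathbb{Z}$, then $\mu=0$. *)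

theory Defs
  imports "HOL-Analysis.Analysis"
begin

definition sigmoidal :: "(real \<Rightarrow> real) \<Rightarrow> bool" where
  "sigmoidal \<sigma> \<longleftrightarrow> (\<sigma> \<longlongrightarrow> 1) at_top \<and> (\<sigma> \<longlongrightarrow> 0) at_bot"

definition regular_borel_measure_on :: "'a::topological_space set \<Rightarrow> 'a measure \<Rightarrow> bool" where
  "regular_borel_measure_on X N \<longleftrightarrow>
     sets N = sets (restrict_space borel X) \<and> finite_measure N \<and>
     (\<forall>A\<in>sets N.
        emeasure N A = (SUP K\<in>{K. compact K \<and> K \<subseteq> A}. emeasure N K) \<and>
        emeasure N A = (INF U\<in>{U. open U \<and> A \<subseteq> U}. emeasure N (U \<inter> X)))"

text \<open>A regular signed Borel measure mu on X is represented by its Jordan decomposition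
  mu = mu_pos - mu_neg with mu_pos, mu_neg finite regular Borel measures on X.
  Then the integral against mu is the difference of the integrals, and mu = 0 means that
  mu_pos and mu_neg agree on all Borel sets of X.\<close>
definition discriminatory :: "'n::finite itself \<Rightarrow> (real \<Rightarrow> real) \<Rightarrow> bool" where
  "discriminatory _ \<sigma> \<longleftrightarrow>
     (\<forall>(X :: (real^'n) set) (\<mu>p :: (real^'n) measure) (\<mu>n :: (real^'n) measure).
        compact X \<and> X \<noteq> {} \<and> regular_borel_measure_on X \<mu>p \<and> regular_borel_measure_on X \<mu>n \<and>
        (\<forall>(m :: real^'n) (k :: int). (\<forall>i. m $ i \<in> \<int>) \<longrightarrow>
           (\<integral>x. \<sigma> (m \<bullet> x + of_int k) \<partial>\<mu>p) - (\<integral>x. \<sigma> (m \<bullet> x + of_int k) \<partial>\<mu>n) = 0)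
        \<longrightarrow> (\<forall>A\<in>sets \<mu>p. measure \<mu>p A - measure \<mu>n A = 0))"

end

theory Submission
  imports Defs
begin

text \<open>The functions with the same integral under both measures form a vector space closed under
  bounded pointwise limits. Sending the slope to infinity in \<open>\<sigma> (n (m \<bullet> x - k) + j)\<close>, and then
  \<open>j\<close> to infinity, puts the indicators of the half-spaces \<open>{x. k \<le> m \<bullet> x}\<close> with integer \<open>m\<close>,
  \<open>k\<close> into this space. Finite combinations of these indicators approximate \<open>\<phi> (m \<bullet> x)\<close> for
  continuous \<open>\<phi>\<close>; clearing denominators, this covers \<open>cos (a \<bullet> x)\<close> and \<open>sin (a \<bullet> x)\<close> for
  rational \<open>a\<close>. These trigonometric polynomials form a point-separating algebra, so by
  Stone--Weierstrass every continuous function, hence every indicator of a closed set, has the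
  same integral under both measures, and the measures coincide.\<close>

definition same_integral :: "'a measure \<Rightarrow> 'a measure \<Rightarrow> ('a \<Rightarrow> real) \<Rightarrow> bool" where
  "same_integral M N f \<longleftrightarrow> integrable M f \<and> integrable N f \<and> integral\<^sup>L M f = integral\<^sup>L N f"

lemma same_integral_add:
    "same_integral M N f \<Longrightarrow> same_integral M N g \<Longrightarrow> same_integral M N (\<lambda>x. f x + g x)"
  and same_integral_diff:
    "same_integral M N f \<Longrightarrow> same_integral M N g \<Longrightarrow> same_integral M N (\<lambda>x. f x - g x)"
  and same_integral_cmult: "same_integral M N f \<Longrightarrow> same_integral M N (\<lambda>x. c * f x)"
  by (auto simp: same_integral_def)

lemma same_integral_sum:
  "(\<And>j. j \<in> J \<Longrightarrow> same_integral M N (g j)) \<Longrightarrow> same_integral M N (\<lambda>x. \<Sum>j\<in>J. g j x)"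
  by (induction J rule: infinite_finite_induct) (auto simp: same_integral_def)

lemma sigmoidal_tendsto_steep:
  assumes "sigmoidal \<sigma>"
  shows "(\<lambda>n. \<sigma> (real n * t + c)) \<longlonglongrightarrow> (if t > 0 then 1 else if t = 0 then \<sigma> c else 0)"
proof -
  have top: "(\<sigma> \<longlongrightarrow> 1) at_top" and bot: "(\<sigma> \<longlongrightarrow> 0) at_bot"
    using assms by (auto simp: sigmoidal_def)
  consider "t > 0" | "t = 0" | "t < 0" by linarith
  then show ?thesis
  proof cases
    case 1
    then have "filterlim (\<lambda>n. real n * t + c) at_top sequentially" by real_asymp
    with 1 show ?thesis using filterlim_compose[OF top] by simp
  next
    case 3
    then have "filterlim (\<lambda>n. real n * t + c) at_bot sequentially" by real_asymp
    with 3 show ?thesis using filterlim_compose[OF bot] by simp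
  qed simp
qed

lemma floor_mult_div_bounds:
  fixes c t :: real
  assumes "c > 0"
  shows "t - 1 / c \<le> of_int \<lfloor>c * t\<rfloor> / c" and "of_int \<lfloor>c * t\<rfloor> / c \<le> t"
proof -
  have "(t - 1 / c) * c \<le> of_int \<lfloor>c * t\<rfloor>" "of_int \<lfloor>c * t\<rfloor> \<le> t * c"
    using assms by (simp_all add: algebra_simps) linarith+
  with assms show "t - 1 / c \<le> of_int \<lfloor>c * t\<rfloor> / c" "of_int \<lfloor>c * t\<rfloor> / c \<le> t"
    by (simp_all add: pos_le_divide_eq pos_divide_le_eq)
qed

lemma floor_mult_div_tendsto: "(\<lambda>n. of_int \<lfloor>real (Suc n) * t\<rfloor> / real (Suc n)) \<longlonglongrightarrow> t"
proof (rule tendsto_sandwich[OF _ _ _ tendsto_const])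
  show "\<forall>\<^sub>F n in sequentially. t - 1 / real (Suc n) \<le> of_int \<lfloor>real (Suc n) * t\<rfloor> / real (Suc n)"
    "\<forall>\<^sub>F n in sequentially. of_int \<lfloor>real (Suc n) * t\<rfloor> / real (Suc n) \<le> t"
    by (simp_all add: floor_mult_div_bounds del: of_nat_Suc)
  show "(\<lambda>n. t - 1 / real (Suc n)) \<longlonglongrightarrow> t" by real_asymp
qed

lemma sum_of_bool_steps_eq_floor:
  fixes g :: "int \<Rightarrow> real" and t :: real
  assumes "finite J" and "\<lfloor>t\<rfloor> \<in> J"
  shows "(\<Sum>j\<in>J. g j * (of_bool (of_int j \<le> t) - of_bool (of_int (j + 1) \<le> t))) = g \<lfloor>t\<rfloor>"
proof -
  have "of_bool (of_int j \<le> t) - of_bool (of_int (j + 1) \<le> t) = (of_bool (j = \<lfloor>t\<rfloor>) :: real)" for j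
  proof -
    have "(of_int j \<le> t) = (j \<le> \<lfloor>t\<rfloor>)" "(of_int (j + 1) \<le> t) = (j + 1 \<le> \<lfloor>t\<rfloor>)"
      by (simp_all only: le_floor_iff)
    then show ?thesis by auto
  qed
  then show ?thesis using assms by simp
qed

lemma rationals_common_denominator:
  assumes "finite A" and "A \<subseteq> \<rat>"
  shows "\<exists>D::nat. D > 0 \<and> (\<forall>x\<in>A. real D * x \<in> \<int>)"
  using assms
proof (induction A rule: finite_induct)
  case empty
  show ?case by (intro exI[of _ 1]) simp
next
  case (insert x A)
  then obtain D :: nat where D: "D > 0" "\<forall>y\<in>A. real D * y \<in> \<int>" by auto
  obtain p q where pq: "q > 0" "x = of_int p / of_int q"
    using insert.prems Rats_cases' by blast
  have "real (D * nat q) * y \<in> \<int>" if "y \<in> insert x A" for y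
  proof (cases "y = x")
    case True
    then show ?thesis using pq by (simp add: Ints_mult)
  next
    case False
    with that D have "real D * y \<in> \<int>" by simp
    moreover have "real (D * nat q) * y = of_int q * (real D * y)" using pq by simp
    ultimately show ?thesis by (metis Ints_mult Ints_of_int)
  qed
  then show ?case using D pq by (intro exI[of _ "D * nat q"]) simp
qed

locale finite_measure_pair = M: finite_measure M + N: finite_measure N
  for M N :: "'a measure" +
  assumes sets_eq: "sets M = sets N"
begin

lemma space_eq: "space N = space M"
  using sets_eq_imp_space_eq[OF sets_eq] by simp

lemma same_integral_cong:
  assumes "same_integral M N f" and eq: "\<And>x. x \<in> space M \<Longrightarrow> f x = g x"
  shows "same_integral M N g"
proof -
  have "integrable M f = integrable M g" "integral\<^sup>L M f = integral\<^sup>L M g"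
    "integrable N f = integrable N g" "integral\<^sup>L N f = integral\<^sup>L N g"
    using eq space_eq
    by (auto intro!: Bochner_Integration.integrable_cong Bochner_Integration.integral_cong)
  with assms(1) show ?thesis
    by (simp add: same_integral_def)
qed

lemma same_integral_bounded:
  assumes f: "f \<in> borel_measurable M" and bound: "\<And>x. x \<in> space M \<Longrightarrow> \<bar>f x\<bar> \<le> B"
    and "integral\<^sup>L M f = integral\<^sup>L N f"
  shows "same_integral M N f"
proof -
  have "integrable M f"
    using bound f by (intro M.integrable_const_bound[where B=B] AE_I2) auto
  moreover have "integrable N f"
    using bound f measurable_cong_sets[OF sets_eq refl] space_eq
    by (intro N.integrable_const_bound[where B=B] AE_I2) auto
  ultimately show ?thesis
    using assms(3) by (simp add: same_integral_def)
qed

lemma same_integral_bounded_limit: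
  assumes s: "\<And>i. same_integral M N (s i)"
    and lim: "\<And>x. x \<in> space M \<Longrightarrow> (\<lambda>i. s i x) \<longlonglongrightarrow> f x"
    and bound: "\<And>i x. x \<in> space M \<Longrightarrow> \<bar>s i x\<bar> \<le> C"
  shows "same_integral M N f"
proof -
  have conv: "integrable L f \<and> (\<lambda>i. integral\<^sup>L L (s i)) \<longlonglongrightarrow> integral\<^sup>L L f"
    if "finite_measure L" "space L = space M" "\<And>i. integrable L (s i)" for L
  proof -
    interpret finite_measure L by fact
    have "f \<in> borel_measurable L"
      by (rule borel_measurable_LIMSEQ_real[of L s]) (use that lim in auto)
    moreover have "integrable L (\<lambda>_. C)" by simp
    moreover have "AE x in L. (\<lambda>i. s i x) \<longlonglongrightarrow> f x" "\<And>i. AE x in L. norm (s i x) \<le> C"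
      using that lim bound by auto
    ultimately show ?thesis
      using integrable_dominated_convergence integral_dominated_convergence that(3) by blast
  qed
  have M: "integrable M f \<and> (\<lambda>i. integral\<^sup>L M (s i)) \<longlonglongrightarrow> integral\<^sup>L M f"
    by (rule conv) (use s M.finite_measure_axioms in \<open>auto simp: same_integral_def\<close>)
  have N: "integrable N f \<and> (\<lambda>i. integral\<^sup>L N (s i)) \<longlonglongrightarrow> integral\<^sup>L N f"
    by (rule conv) (use s N.finite_measure_axioms space_eq in \<open>auto simp: same_integral_def\<close>)
  have "(\<lambda>i. integral\<^sup>L N (s i)) = (\<lambda>i. integral\<^sup>L M (s i))"
    using s by (simp add: same_integral_def)
  with M N show ?thesis
    unfolding same_integral_def by (metis LIMSEQ_unique)
qed

lemma same_integral_heaviside: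
  fixes u :: "'a \<Rightarrow> real"
  assumes sigmoidal: "sigmoidal \<sigma>" and bound: "\<And>t. \<bar>\<sigma> t\<bar> \<le> B"
    and steep: "\<And>(n::nat) (j::int). same_integral M N (\<lambda>x. \<sigma> (real n * u x + of_int j))"
  shows "same_integral M N (indicator {x. 0 \<le> u x})"
proof -
  have step: "same_integral M N (\<lambda>x. if u x > 0 then 1 else if u x = 0 then \<sigma> (of_int j) else 0)"
    for j :: int
    by (rule same_integral_bounded_limit[where s="\<lambda>n x. \<sigma> (real n * u x + of_int j)",
          OF steep sigmoidal_tendsto_steep[OF sigmoidal] bound])
  have "B \<ge> 0" using bound[of 0] by linarith
  show ?thesis
  proof (rule same_integral_bounded_limit[OF step])
    show "\<bar>if u x > 0 then 1 else if u x = 0 then \<sigma> (of_int (int i)) else 0\<bar> \<le> 1 + B" for i x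
      using bound[of "of_int (int i)"] \<open>B \<ge> 0\<close> by auto
    have "(\<lambda>i. \<sigma> (real i)) \<longlonglongrightarrow> 1"
      using sigmoidal filterlim_compose filterlim_real_sequentially by (auto simp: sigmoidal_def)
    then show "(\<lambda>i. if u x > 0 then 1 else if u x = 0 then \<sigma> (of_int (int i)) else 0)
        \<longlonglongrightarrow> indicator {x. 0 \<le> u x} x" for x
      by (cases "u x" "0::real" rule: linorder_cases) (auto simp: indicator_def)
  qed
qed

lemma same_integral_floor_comp:
  fixes u :: "'a \<Rightarrow> real" and g :: "int \<Rightarrow> real" and c :: nat
  assumes halfspaces: "\<And>j. same_integral M N (indicator {x. of_int j \<le> real c * u x})"
    and bound: "\<And>x. x \<in> space M \<Longrightarrow> \<bar>u x\<bar> \<le> L"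
  shows "same_integral M N (\<lambda>x. g \<lfloor>real c * u x\<rfloor>)"
proof -
  define J where "J = {-\<lceil>real c * L\<rceil> - 1 .. \<lceil>real c * L\<rceil>}"
  have "same_integral M N (\<lambda>x. \<Sum>j\<in>J. g j *
      (indicator {x. of_int j \<le> real c * u x} x - indicator {x. of_int (j + 1) \<le> real c * u x} x))"
    by (intro same_integral_sum same_integral_cmult same_integral_diff halfspaces)
  then show ?thesis
  proof (rule same_integral_cong)
    fix x assume "x \<in> space M"
    then have "\<bar>real c * u x\<bar> \<le> real c * L"
      using bound by (simp add: abs_mult mult_left_mono)
    then have "\<lfloor>real c * u x\<rfloor> \<in> J"
      unfolding J_def by (simp add: abs_le_iff) linarith
    then show "(\<Sum>j\<in>J. g j * (indicator {x. of_int j \<le> real c * u x} x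
        - indicator {x. of_int (j + 1) \<le> real c * u x} x)) = g \<lfloor>real c * u x\<rfloor>"
      using sum_of_bool_steps_eq_floor[of J "real c * u x" g] by (simp add: J_def indicator_def)
  qed
qed

lemma same_integral_comp_continuous:
  fixes u :: "'a \<Rightarrow> real"
  assumes halfspaces: "\<And>(c::nat) (j::int). same_integral M N (indicator {x. of_int j \<le> real c * u x})"
    and bound: "\<And>x. x \<in> space M \<Longrightarrow> \<bar>u x\<bar> \<le> L"
    and "continuous_on UNIV \<phi>"
  shows "same_integral M N (\<lambda>x. \<phi> (u x))"
proof -
  obtain B where B: "\<And>t. t \<in> {-L-1..L+1} \<Longrightarrow> \<bar>\<phi> t\<bar> \<le> B"
    using compact_imp_bounded[OF compact_continuous_image[of "{-L-1..L+1}" \<phi>]] \<open>continuous_on UNIV \<phi>\<close>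
    by (force simp: bounded_iff intro: continuous_on_subset)
  show ?thesis
  proof (rule same_integral_bounded_limit)
    show "same_integral M N (\<lambda>x. \<phi> (of_int \<lfloor>real (Suc K) * u x\<rfloor> / real (Suc K)))" for K
      using same_integral_floor_comp[OF halfspaces bound] .
    show "(\<lambda>K. \<phi> (of_int \<lfloor>real (Suc K) * u x\<rfloor> / real (Suc K))) \<longlonglongrightarrow> \<phi> (u x)" for x
      using \<open>continuous_on UNIV \<phi>\<close>
      by (intro isCont_tendsto_compose[OF _ floor_mult_div_tendsto])
        (simp add: continuous_on_eq_continuous_at)
    show "\<bar>\<phi> (of_int \<lfloor>real (Suc K) * u x\<rfloor> / real (Suc K))\<bar> \<le> B" if "x \<in> space M" for K x
    proof (rule B)
      have "1 / real (Suc K) \<le> 1" "-L \<le> u x \<and> u x \<le> L"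
        using bound[OF that] by (simp_all add: abs_le_iff)
      then show "of_int \<lfloor>real (Suc K) * u x\<rfloor> / real (Suc K) \<in> {-L-1..L+1}"
        using floor_mult_div_bounds[of "real (Suc K)" "u x"] by (simp only: atLeastAtMost_iff) linarith
    qed
  qed
qed

end

locale compact_measure_pair = finite_measure_pair M N for M N :: "'a::metric_space measure" +
  fixes X :: "'a set"
  assumes compact: "compact X" and sets_M: "sets M = sets (restrict_space borel X)"
begin

lemma space_M: "space M = X"
  using sets_eq_imp_space_eq[OF sets_M] by (simp add: space_restrict_space)

lemma same_integral_continuous_if_function_ring:
  assumes "function_ring_on R X" and R: "\<And>g. g \<in> R \<Longrightarrow> same_integral M N g"
    and f: "continuous_on X f"
  shows "same_integral M N f"
proof -
  obtain F where F: "F \<in> UNIV \<rightarrow> R" and lim: "uniform_limit X F f sequentially"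
    using function_ring_on.Stone_Weierstrass[OF assms(1) f] by blast
  obtain n0 where n0: "\<And>n x. n \<ge> n0 \<Longrightarrow> x \<in> X \<Longrightarrow> dist (F n x) (f x) < 1"
    using uniform_limitD[OF lim, of 1] by (auto simp: eventually_sequentially)
  obtain B where B: "\<And>x. x \<in> X \<Longrightarrow> \<bar>f x\<bar> \<le> B"
    using compact_imp_bounded[OF compact_continuous_image[OF f compact]] by (auto simp: bounded_iff)
  show ?thesis
  proof (rule same_integral_bounded_limit[where s="\<lambda>i. F (i + n0)"])
    show "same_integral M N (F (i + n0))" for i
      using F R by auto
    show "(\<lambda>i. F (i + n0) x) \<longlonglongrightarrow> f x" if "x \<in> space M" for x
      using LIMSEQ_ignore_initial_segment[OF tendsto_uniform_limitI[OF lim]] that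
      by (simp add: space_M)
    show "\<bar>F (i + n0) x\<bar> \<le> B + 1" if "x \<in> space M" for i x
      using n0[of "i + n0" x] B[of x] that by (auto simp: space_M dist_real_def)
  qed
qed

lemma same_integral_indicator_closed:
  assumes continuous: "\<And>f. continuous_on UNIV f \<Longrightarrow> same_integral M N f" and "closed C"
  shows "same_integral M N (indicator C)"
proof (cases "C = {}")
  case True
  then have "indicator C = (\<lambda>_. 0 :: real)" by (simp add: fun_eq_iff)
  then show ?thesis using continuous[of "\<lambda>_. 0"] by simp
next
  case False
  show ?thesis
  proof (rule same_integral_bounded_limit[where s="\<lambda>k x. max 0 (1 - real k * infdist x C)"])
    show "same_integral M N (\<lambda>x. max 0 (1 - real k * infdist x C))" for k
      by (intro continuous continuous_intros)
    show "\<bar>max 0 (1 - real k * infdist x C)\<bar> \<le> 1" for k x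
      using infdist_nonneg[of x C] by auto
    show "(\<lambda>k. max 0 (1 - real k * infdist x C)) \<longlonglongrightarrow> indicator C x" for x
    proof (cases "x \<in> C")
      case False
      then have "infdist x C > 0"
        using infdist_pos_not_in_closed \<open>closed C\<close> \<open>C \<noteq> {}\<close> by blast
      then have "(\<lambda>k. max 0 (1 - real k * infdist x C)) \<longlonglongrightarrow> 0" by real_asymp
      with False show ?thesis by simp
    qed simp
  qed
qed

lemma measure_eq_if_same_integral_continuous:
  assumes continuous: "\<And>f. continuous_on UNIV f \<Longrightarrow> same_integral M N f"
  shows "M = N"
proof -
  let ?E = "(\<inter>) X ` Collect closed"
  have borel: "sets borel = sigma_sets UNIV (Collect closed)"
    by (subst borel_eq_closed) (rule sets_measure_of, simp)
  have "X \<in> sigma_sets UNIV (Collect closed)"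
    using compact_imp_closed[OF compact] by (auto intro: sigma_sets.Basic)
  then have "sets (restrict_space borel X) = sigma_sets X ?E"
    unfolding sets_restrict_space borel by (rule sigma_sets_Int) simp
  then have sets: "sets M = sigma_sets X ?E" "sets N = sigma_sets X ?E"
    using sets_M sets_eq by auto
  show ?thesis
  proof (rule measure_eqI_generator_eq[OF _ _ _ sets, of "\<lambda>_. X"])
    show "Int_stable ?E"
      by (rule Int_stableI_image) (auto intro!: bexI[of _ "_ \<inter> _"])
    show "?E \<subseteq> Pow X" "range (\<lambda>_. X) \<subseteq> ?E" "(\<Union>i::nat. X) = X"
      by (auto intro!: image_eqI[of _ _ UNIV])
    show "emeasure M X \<noteq> \<infinity>"
      by simp
    fix A assume "A \<in> ?E"
    then obtain C where "closed C" and A: "A = X \<inter> C" by auto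
    have "A \<in> sets M" using sets A \<open>closed C\<close> by (auto intro: sigma_sets.Basic)
    have "same_integral M N (indicator A)"
      using same_integral_indicator_closed[OF continuous \<open>closed C\<close>]
      by (rule same_integral_cong) (auto simp: A space_M split: split_indicator)
    then have "measure M A = measure N A"
      using \<open>A \<in> sets M\<close> sets_eq by (simp add: same_integral_def)
    then show "emeasure M A = emeasure N A"
      by (simp add: M.emeasure_eq_measure N.emeasure_eq_measure)
  qed
qed

end

inductive_set rat_trig_poly :: "(real^'n::finite \<Rightarrow> real) set" where
  cos: "(\<forall>i. a $ i \<in> \<rat>) \<Longrightarrow> (\<lambda>x. cos (a \<bullet> x)) \<in> rat_trig_poly"
| sin: "(\<forall>i. a $ i \<in> \<rat>) \<Longrightarrow> (\<lambda>x. sin (a \<bullet> x)) \<in> rat_trig_poly"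
| add: "f \<in> rat_trig_poly \<Longrightarrow> g \<in> rat_trig_poly \<Longrightarrow> (\<lambda>x. f x + g x) \<in> rat_trig_poly"
| cmult: "f \<in> rat_trig_poly \<Longrightarrow> (\<lambda>x. c * f x) \<in> rat_trig_poly"

lemma rat_trig_poly_const: "(\<lambda>_. c) \<in> rat_trig_poly"
  using rat_trig_poly.cmult[OF rat_trig_poly.cos[of 0]] by simp

lemma rat_trig_poly_mult_cos_sin:
  assumes "f \<in> rat_trig_poly" and b: "\<forall>i. b $ i \<in> \<rat>"
  shows "(\<lambda>x. f x * cos (b \<bullet> x)) \<in> rat_trig_poly \<and> (\<lambda>x. f x * sin (b \<bullet> x)) \<in> rat_trig_poly"
  using assms(1)
proof induction
  case (cos a)
  then have rat: "\<forall>i. (a - b) $ i \<in> \<rat>" "\<forall>i. (a + b) $ i \<in> \<rat>" using b by auto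
  have eqs: "(\<lambda>x. cos (a \<bullet> x) * cos (b \<bullet> x))
      = (\<lambda>x. 1/2 * cos ((a - b) \<bullet> x) + 1/2 * cos ((a + b) \<bullet> x))"
    "(\<lambda>x. cos (a \<bullet> x) * sin (b \<bullet> x))
      = (\<lambda>x. 1/2 * sin ((a + b) \<bullet> x) + -1/2 * sin ((a - b) \<bullet> x))"
    by (auto simp: inner_diff_left inner_add_left cos_add cos_diff sin_add sin_diff algebra_simps)
  show ?case
    unfolding eqs
    by (intro conjI rat_trig_poly.add rat_trig_poly.cmult rat_trig_poly.cos rat_trig_poly.sin rat)
next
  case (sin a)
  then have rat: "\<forall>i. (a - b) $ i \<in> \<rat>" "\<forall>i. (a + b) $ i \<in> \<rat>" using b by auto
  have eqs: "(\<lambda>x. sin (a \<bullet> x) * cos (b \<bullet> x))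
      = (\<lambda>x. 1/2 * sin ((a + b) \<bullet> x) + 1/2 * sin ((a - b) \<bullet> x))"
    "(\<lambda>x. sin (a \<bullet> x) * sin (b \<bullet> x))
      = (\<lambda>x. 1/2 * cos ((a - b) \<bullet> x) + -1/2 * cos ((a + b) \<bullet> x))"
    by (auto simp: inner_diff_left inner_add_left cos_add cos_diff sin_add sin_diff algebra_simps)
  show ?case
    unfolding eqs
    by (intro conjI rat_trig_poly.add rat_trig_poly.cmult rat_trig_poly.cos rat_trig_poly.sin rat)
next
  case (add f g)
  then show ?case
    using rat_trig_poly.add[of "\<lambda>x. f x * cos (b \<bullet> x)" "\<lambda>x. g x * cos (b \<bullet> x)"]
      rat_trig_poly.add[of "\<lambda>x. f x * sin (b \<bullet> x)" "\<lambda>x. g x * sin (b \<bullet> x)"]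
    by (simp add: distrib_right)
next
  case (cmult f c)
  then show ?case
    using rat_trig_poly.cmult[of "\<lambda>x. f x * cos (b \<bullet> x)" c]
      rat_trig_poly.cmult[of "\<lambda>x. f x * sin (b \<bullet> x)" c]
    by (simp add: mult.assoc)
qed

lemma rat_trig_poly_mult:
  assumes "f \<in> rat_trig_poly" and "g \<in> rat_trig_poly"
  shows "(\<lambda>x. f x * g x) \<in> rat_trig_poly"
  using assms(2)
proof induction
  case (add g h)
  then show ?case
    using rat_trig_poly.add[of "\<lambda>x. f x * g x" "\<lambda>x. f x * h x"] by (simp add: distrib_left)
next
  case (cmult g c)
  then show ?case
    using rat_trig_poly.cmult[of "\<lambda>x. f x * g x" c] by (simp add: algebra_simps)
qed (use rat_trig_poly_mult_cos_sin[OF assms(1)] in blast)+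

lemma rat_trig_poly_separates:
  fixes x y :: "real^'n::finite"
  assumes "x \<noteq> y"
  shows "\<exists>f\<in>rat_trig_poly. f x \<noteq> f y"
proof (rule ccontr)
  assume "\<not> ?thesis"
  then have eq: "f x = f y" if "f \<in> rat_trig_poly" for f
    using that by blast
  obtain i where "x $ i \<noteq> y $ i" using assms by (auto simp: vec_eq_iff)
  define d where "d = x $ i - y $ i"
  then have "\<bar>d\<bar> > 0" using \<open>x $ i \<noteq> y $ i\<close> by simp
  then obtain q where q: "q \<in> \<rat>" "0 < q" "q < pi / \<bar>d\<bar>"
    using Rats_dense_in_real[of 0 "pi / \<bar>d\<bar>"] by auto
  define a where "a = axis i q"
  have a: "\<forall>j. a $ j \<in> \<rat>" using q by (simp add: a_def axis_def)
  have "cos (a \<bullet> x - a \<bullet> y) = cos (a \<bullet> y) * cos (a \<bullet> y) + sin (a \<bullet> y) * sin (a \<bullet> y)"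
    using eq[OF rat_trig_poly.cos[OF a]] eq[OF rat_trig_poly.sin[OF a]] by (simp add: cos_diff)
  then have "cos \<bar>q * d\<bar> = 1"
    using sin_cos_squared_add3[of "a \<bullet> y"]
    by (simp add: a_def inner_axis' d_def algebra_simps)
  moreover have "0 < \<bar>q * d\<bar>" "\<bar>q * d\<bar> < pi"
    using q \<open>\<bar>d\<bar> > 0\<close> by (auto simp: abs_mult field_simps)
  then have "cos \<bar>q * d\<bar> < cos 0"
    by (intro cos_monotone_0_pi) auto
  ultimately show False by simp
qed

lemma function_ring_on_rat_trig_poly:
  fixes X :: "(real^'n::finite) set"
  assumes "compact X"
  shows "function_ring_on rat_trig_poly X"
proof
  show "continuous_on X f" if "f \<in> rat_trig_poly" for f
    using that by induction (auto intro!: continuous_intros)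
  show "(\<lambda>x. f x + g x) \<in> rat_trig_poly" if "f \<in> rat_trig_poly" "g \<in> rat_trig_poly" for f g
    using that by (rule rat_trig_poly.add)
  show "(\<lambda>x. f x * g x) \<in> rat_trig_poly" if "f \<in> rat_trig_poly" "g \<in> rat_trig_poly" for f g
    using that by (rule rat_trig_poly_mult)
  show "\<exists>f\<in>rat_trig_poly. f x \<noteq> f y" if "x \<noteq> y" for x y
    using that by (rule rat_trig_poly_separates)
qed (use assms rat_trig_poly_const in auto)

locale compact_vec_measure_pair = compact_measure_pair M N X
  for M N :: "(real^'n::finite) measure" and X
begin

lemma same_integral_comp_rational_inner:
  assumes halfspaces: "\<And>m k. (\<forall>i. m $ i \<in> \<int>) \<Longrightarrow> same_integral M N (indicator {x. of_int k \<le> m \<bullet> x})"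
    and a: "\<forall>i. a $ i \<in> \<rat>" and "continuous_on UNIV \<psi>"
  shows "same_integral M N (\<lambda>x. \<psi> (a \<bullet> x))"
proof -
  obtain D :: nat where "D > 0" and D: "\<forall>i. real D * a $ i \<in> \<int>"
    using rationals_common_denominator[of "range (($) a)"] a by auto
  define m where "m = real D *\<^sub>R a"
  have "continuous_on X (\<lambda>x. m \<bullet> x)"
    by (intro continuous_intros)
  then obtain L where L: "\<And>x. x \<in> X \<Longrightarrow> \<bar>m \<bullet> x\<bar> \<le> L"
    using compact_imp_bounded[OF compact_continuous_image[OF _ compact]] by (force simp: bounded_iff)
  have "same_integral M N (\<lambda>x. (\<lambda>t. \<psi> (t / real D)) (m \<bullet> x))"
  proof (rule same_integral_comp_continuous[where u="\<lambda>x. m \<bullet> x"])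
    show "same_integral M N (indicator {x. of_int j \<le> real c * (m \<bullet> x)})" for c j
      using halfspaces[of "real c *\<^sub>R m" j] D by (simp add: m_def mult.assoc Ints_mult)
    show "\<bar>m \<bullet> x\<bar> \<le> L" if "x \<in> space M" for x
      using L that by (simp add: space_M)
    show "continuous_on UNIV (\<lambda>t. \<psi> (t / real D))"
      using \<open>D > 0\<close>
      by (intro continuous_on_compose2[OF \<open>continuous_on UNIV \<psi>\<close>] continuous_intros) auto
  qed
  moreover have "real D \<noteq> 0" using \<open>D > 0\<close> by simp
  ultimately show ?thesis
    by (simp add: m_def)
qed

lemma measure_eq_if_same_integral_halfspaces:
  assumes halfspaces: "\<And>m k. (\<forall>i. m $ i \<in> \<int>) \<Longrightarrow> same_integral M N (indicator {x. of_int k \<le> m \<bullet> x})"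
  shows "M = N"
proof -
  have trig: "same_integral M N f" if "f \<in> rat_trig_poly" for f
    using that
  proof induction
    case (cos a)
    then show ?case
      by (intro same_integral_comp_rational_inner[OF halfspaces, where \<psi>=cos] continuous_intros)
  next
    case (sin a)
    then show ?case
      by (intro same_integral_comp_rational_inner[OF halfspaces, where \<psi>=sin] continuous_intros)
  qed (auto intro: same_integral_add same_integral_cmult)
  show ?thesis
  proof (rule measure_eq_if_same_integral_continuous)
    fix f :: "real^'n \<Rightarrow> real"
    assume "continuous_on UNIV f"
    then have "continuous_on X f" by (rule continuous_on_subset) simp
    moreover have "function_ring_on rat_trig_poly X"
      using compact by (rule function_ring_on_rat_trig_poly)
    ultimately show "same_integral M N f"
      using trig same_integral_continuous_if_function_ring by blast
  qed
qed

end

lemma discriminatory_if_bounded_measurable_sigmoidal: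
  fixes \<sigma> :: "real \<Rightarrow> real"
  assumes "bounded (range \<sigma>)" and "\<sigma> \<in> borel_measurable borel" and "sigmoidal \<sigma>"
  shows "discriminatory TYPE('n::finite) \<sigma>"
  unfolding discriminatory_def
proof (intro allI impI ballI)
  fix X :: "(real^'n) set" and M N :: "(real^'n) measure" and A
  assume hyps: "compact X \<and> X \<noteq> {} \<and> regular_borel_measure_on X M \<and> regular_borel_measure_on X N \<and>
    (\<forall>(m :: real^'n) (k :: int). (\<forall>i. m $ i \<in> \<int>) \<longrightarrow>
       (\<integral>x. \<sigma> (m \<bullet> x + of_int k) \<partial>M) - (\<integral>x. \<sigma> (m \<bullet> x + of_int k) \<partial>N) = 0)"
  have "finite_measure M" "finite_measure N"
    and "sets M = sets (restrict_space borel X)" "sets N = sets (restrict_space borel X)"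
    using hyps unfolding regular_borel_measure_on_def by blast+
  with hyps interpret compact_vec_measure_pair M N X
    by (intro compact_vec_measure_pair.intro compact_measure_pair.intro finite_measure_pair.intro
        compact_measure_pair_axioms.intro finite_measure_pair_axioms.intro) auto
  obtain B where B: "\<And>t. \<bar>\<sigma> t\<bar> \<le> B"
    using \<open>bounded (range \<sigma>)\<close> by (auto simp: bounded_iff)
  have ridge: "same_integral M N (\<lambda>x. \<sigma> (m \<bullet> x + of_int k))" if "\<forall>i. m $ i \<in> \<int>" for m k
  proof (rule same_integral_bounded)
    have "(\<lambda>x. \<sigma> (m \<bullet> x + of_int k)) \<in> borel_measurable borel"
      by (intro measurable_compose[OF _ \<open>\<sigma> \<in> borel_measurable borel\<close>]
          borel_measurable_continuous_onI continuous_intros)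
    then show "(\<lambda>x. \<sigma> (m \<bullet> x + of_int k)) \<in> borel_measurable M"
      unfolding measurable_cong_sets[OF sets_M refl] by (rule measurable_restrict_space1)
    show "\<bar>\<sigma> (m \<bullet> x + of_int k)\<bar> \<le> B" for x
      by (rule B)
    show "(\<integral>x. \<sigma> (m \<bullet> x + of_int k) \<partial>M) = (\<integral>x. \<sigma> (m \<bullet> x + of_int k) \<partial>N)"
      using hyps that by simp
  qed
  have "same_integral M N (indicator {x. of_int k \<le> m \<bullet> x})" if "\<forall>i. m $ i \<in> \<int>" for m k
  proof -
    have "same_integral M N (indicator {x. 0 \<le> m \<bullet> x - of_int k})"
    proof (rule same_integral_heaviside[OF \<open>sigmoidal \<sigma>\<close> B])
      fix n :: nat and j :: int
      have "\<forall>i. (real n *\<^sub>R m) $ i \<in> \<int>"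
        using that by (simp add: Ints_mult)
      then have "same_integral M N (\<lambda>x. \<sigma> ((real n *\<^sub>R m) \<bullet> x + of_int (j - int n * k)))"
        by (rule ridge)
      then show "same_integral M N (\<lambda>x. \<sigma> (real n * (m \<bullet> x - of_int k) + of_int j))"
        by (simp add: algebra_simps)
    qed
    then show ?thesis
      by simp
  qed
  then have "M = N"
    by (rule measure_eq_if_same_integral_halfspaces)
  then show "measure M A - measure N A = 0"
    by simp
qed

lemma bounded_range_if_continuous_sigmoidal:
  fixes \<sigma> :: "real \<Rightarrow> real"
  assumes "continuous_on UNIV \<sigma>" and "sigmoidal \<sigma>"
  shows "bounded (range \<sigma>)"
proof -
  have top: "(\<sigma> \<longlongrightarrow> 1) at_top" and bot: "(\<sigma> \<longlongrightarrow> 0) at_bot"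
    using \<open>sigmoidal \<sigma>\<close> by (simp_all add: sigmoidal_def)
  have "eventually (\<lambda>t. dist (\<sigma> t) 1 < 1) at_top" using top by (rule tendstoD) simp
  moreover have "eventually (\<lambda>t. dist (\<sigma> t) 0 < 1) at_bot" using bot by (rule tendstoD) simp
  ultimately obtain T1 T0 where T1: "\<And>t. t \<ge> T1 \<Longrightarrow> \<bar>\<sigma> t - 1\<bar> < 1"
    and T0: "\<And>t. t \<le> T0 \<Longrightarrow> \<bar>\<sigma> t\<bar> < 1"
    by (auto simp: eventually_at_top_linorder eventually_at_bot_linorder dist_real_def)
  have "range \<sigma> \<subseteq> \<sigma> ` {T0..T1} \<union> cball 0 2"
  proof
    fix y assume "y \<in> range \<sigma>"
    then obtain t where "y = \<sigma> t" by auto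
    then show "y \<in> \<sigma> ` {T0..T1} \<union> cball 0 2"
      using T0[of t] T1[of t] by (cases "t \<le> T0 \<or> t \<ge> T1") auto
  qed
  moreover have "bounded (\<sigma> ` {T0..T1})"
    by (intro compact_imp_bounded compact_continuous_image continuous_on_subset[OF assms(1)]) auto
  ultimately show ?thesis
    by (metis bounded_Un bounded_cball bounded_subset)
qed

theorem lemma4p2p4:
  shows "(\<forall>\<sigma>. bounded (range \<sigma>) \<and> \<sigma> \<in> borel_measurable borel \<and> sigmoidal \<sigma>
            \<longrightarrow> discriminatory TYPE('n::finite) \<sigma>)
       \<and> (\<forall>\<sigma>. continuous_on UNIV \<sigma> \<and> sigmoidal \<sigma> \<longrightarrow> discriminatory TYPE('n::finite) \<sigma>)"
proof (intro conjI allI impI)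
  fix \<sigma> :: "real \<Rightarrow> real"
  assume "bounded (range \<sigma>) \<and> \<sigma> \<in> borel_measurable borel \<and> sigmoidal \<sigma>"
  then show "discriminatory TYPE('n) \<sigma>"
    using discriminatory_if_bounded_measurable_sigmoidal by blast
next
  fix \<sigma> :: "real \<Rightarrow> real"
  assume "continuous_on UNIV \<sigma> \<and> sigmoidal \<sigma>"
  then show "discriminatory TYPE('n) \<sigma>"
    by (intro discriminatory_if_bounded_measurable_sigmoidal bounded_range_if_continuous_sigmoidal
        borel_measurable_continuous_onI) auto
qed

end
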